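(* Let $l<u$ be real, let $\Delta Q$ be real with $0<\Delta Q\le u-l$, and let $\epsilon\ge0$, $0\le\delta<1$ with $\frac{e^\epsilon}{1-\delta}>1$ (i.e. $\epsilon$ and $\delta$ not both zero). Let $b_0=\frac{\Delta Q}{\epsilon-\log(1-\delta)}$. Then $1\le \Delta C(b_0)<\frac{e^\epsilon}{1-\delta}$; in particular $\epsilon-\log\Delta C(b_0)-\log(1-\delta)>0$, so $f(b_0)$ is a well-defined positive number, and $f(b_0)\ge b_0$. Moreover $f(b_0)=b_0$ if and only if $\Delta Q=u-l$.
   Context: For $b>0$ and $p\in[l,u]$, $C_p(b)= 1-\frac12\left(e^{-\frac{p-l}{b}}+e^{-\frac{u-p}{b}}\right)$ (the integral $\int_l^u\frac{1}{2b}e^{-|x-p|/b}dx$), and $\Delta C(b)=\frac{C_{l+\Delta Q}(b)}{C_l(b)}$. The map $f$ is defined for $b>0$ with $\epsilon-\log\Delta C(b)-\log(1-\delta)\neq 0$ by $f(b)=\frac{\Delta Q}{\epsilon-\log\Delta C(b)-\log(1-\delta)}$. *)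

theory Defs
  imports Complex_Main
begin

text \<open>Probability mass of the Laplace(p, b) distribution on [l,u]:
  C_p(b) = 1 - (exp(-(p-l)/b) + exp(-(u-p)/b))/2.\<close>
definition Cp :: "real \<Rightarrow> real \<Rightarrow> real \<Rightarrow> real \<Rightarrow> real" where
  "Cp l u p b = 1 - (exp (- (p - l) / b) + exp (- (u - p) / b)) / 2"

definition DeltaC :: "real \<Rightarrow> real \<Rightarrow> real \<Rightarrow> real \<Rightarrow> real" where
  "DeltaC l u dQ b = Cp l u (l + dQ) b / Cp l u l b"

definition fmap :: "real \<Rightarrow> real \<Rightarrow> real \<Rightarrow> real \<Rightarrow> real \<Rightarrow> real \<Rightarrow> real" where
  "fmap l u dQ eps delta b = dQ / (eps - ln (DeltaC l u dQ b) - ln (1 - delta))"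

end

theory Submission
  imports Defs
begin

text \<open>Write \<open>r = exp (-\<Delta>Q/b)\<close> and \<open>t = exp (-(u-l)/b)\<close>, so that \<open>0 < t \<le> r < 1\<close>.
  Then \<open>\<Delta>C(b) = 1 + (r - t)(1 - r) / (r (1 - t))\<close>, which lies in \<open>[1, 1/r) = [1, exp (\<Delta>Q/b))\<close>
  and equals 1 exactly when \<open>t = r\<close>, i.e. \<open>\<Delta>Q = u - l\<close>. The point \<open>b\<^sub>0\<close> is chosen so that
  \<open>exp (\<Delta>Q/b\<^sub>0) = e\<^sup>\<epsilon>/(1-\<delta>)\<close>; hence the denominator of \<open>f(b\<^sub>0)\<close> is \<open>\<Delta>Q/b\<^sub>0 - ln \<Delta>C(b\<^sub>0)\<close>,
  which is positive and at most \<open>\<Delta>Q/b\<^sub>0\<close>.\<close>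

lemma Cp_left_endpoint: "Cp l u l b = (1 - exp (- (u - l) / b)) / 2"
  unfolding Cp_def by (simp add: field_simps)

lemma DeltaC_eq_excess:
  fixes l u dQ b :: real
  assumes "0 < b" and "l < u"
  defines "r \<equiv> exp (- dQ / b)" and "t \<equiv> exp (- (u - l) / b)"
  shows "DeltaC l u dQ b = 1 + (r - t) * (1 - r) / (r * (1 - t))"
proof -
  have "t < 1" unfolding t_def using assms(1,2) by (simp add: divide_neg_pos)
  have "- (u - (l + dQ)) / b = - (u - l) / b + dQ / b"
    using assms(1) by (simp add: field_simps)
  then have "exp (- (u - (l + dQ)) / b) = t / r"
    unfolding t_def r_def by (simp add: exp_add exp_minus field_simps)
  then have "Cp l u (l + dQ) b = 1 - (r + t / r) / 2"
    unfolding Cp_def r_def by simp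
  moreover have "Cp l u l b = (1 - t) / 2"
    unfolding Cp_left_endpoint t_def ..
  ultimately have "DeltaC l u dQ b = (1 - (r + t / r) / 2) / ((1 - t) / 2)"
    unfolding DeltaC_def by (simp only:)
  also have "\<dots> = 1 + (r - t) * (1 - r) / (r * (1 - t))"
    using \<open>t < 1\<close> by (simp add: r_def field_simps)
  finally show ?thesis .
qed

lemma excess_ratio_bounds:
  fixes r t :: real
  assumes "0 < t" and "t \<le> r" and "r < 1"
  shows "0 \<le> (r - t) * (1 - r) / (r * (1 - t))"
    and "(r - t) * (1 - r) / (r * (1 - t)) = 0 \<longleftrightarrow> t = r"
    and "1 + (r - t) * (1 - r) / (r * (1 - t)) < 1 / r"
proof -
  have den: "r * (1 - t) > 0" using assms by simp
  then show "0 \<le> (r - t) * (1 - r) / (r * (1 - t))"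
    using assms by simp
  show "(r - t) * (1 - r) / (r * (1 - t)) = 0 \<longleftrightarrow> t = r"
    using den assms by auto
  have "0 < (1 - r)\<^sup>2" using assms by simp
  then have "r * (1 - t) + (r - t) * (1 - r) < 1 - t"
    by (simp add: algebra_simps power2_eq_square)
  then have "(r * (1 - t) + (r - t) * (1 - r)) / (r * (1 - t)) < (1 - t) / (r * (1 - t))"
    using den by (rule divide_strict_right_mono)
  moreover have "1 + (r - t) * (1 - r) / (r * (1 - t))
      = (r * (1 - t) + (r - t) * (1 - r)) / (r * (1 - t))"
    using den assms by (simp add: add_divide_distrib)
  ultimately show "1 + (r - t) * (1 - r) / (r * (1 - t)) < 1 / r"
    using assms by simp
qed

context
  fixes l u dQ b :: real
  assumes lu: "l < u" and dQ: "0 < dQ" "dQ \<le> u - l" and b: "0 < b"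
begin

private abbreviation "r \<equiv> exp (- dQ / b)"
private abbreviation "t \<equiv> exp (- (u - l) / b)"

private lemma exps_ordered: "0 < t" "t \<le> r" "r < 1"
proof -
  have "- (u - l) / b \<le> - dQ / b"
    using divide_right_mono[of "- (u - l)" "- dQ" b] dQ b by simp
  then show "0 < t" "t \<le> r" "r < 1"
    using dQ b by (auto simp: divide_neg_pos)
qed

lemma DeltaC_ge_1: "1 \<le> DeltaC l u dQ b"
  using DeltaC_eq_excess[OF b lu] excess_ratio_bounds(1)[OF exps_ordered] by simp

lemma DeltaC_less_exp: "DeltaC l u dQ b < exp (dQ / b)"
  using DeltaC_eq_excess[OF b lu] excess_ratio_bounds(3)[OF exps_ordered]
  by (simp add: exp_minus divide_inverse)

lemma DeltaC_eq_1_iff: "DeltaC l u dQ b = 1 \<longleftrightarrow> dQ = u - l"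
proof -
  have "t = r \<longleftrightarrow> - (u - l) / b = - dQ / b"
    by simp
  also have "\<dots> \<longleftrightarrow> dQ = u - l"
    using b by (simp only: divide_cancel_right) auto
  finally have "t = r \<longleftrightarrow> dQ = u - l" .
  then show ?thesis
    using DeltaC_eq_excess[OF b lu] excess_ratio_bounds(2)[OF exps_ordered] by simp
qed

end

theorem lemma4p1:
  fixes l u dQ eps delta :: real
  assumes "l < u" and "0 < dQ" and "dQ \<le> u - l"
    and "0 \<le> eps" and "0 \<le> delta" and "delta < 1"
    and "exp eps / (1 - delta) > 1"
  defines "b0 \<equiv> dQ / (eps - ln (1 - delta))"
  shows "1 \<le> DeltaC l u dQ b0 \<and> DeltaC l u dQ b0 < exp eps / (1 - delta)
    \<and> eps - ln (DeltaC l u dQ b0) - ln (1 - delta) > 0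
    \<and> fmap l u dQ eps delta b0 > 0
    \<and> fmap l u dQ eps delta b0 \<ge> b0
    \<and> (fmap l u dQ eps delta b0 = b0 \<longleftrightarrow> dQ = u - l)"
proof -
  define L where "L = eps - ln (1 - delta)"
  define D where "D = DeltaC l u dQ b0"
  have "1 - delta < exp eps"
    using assms(6,7) by (simp add: field_simps)
  then have "ln (1 - delta) < eps"
    using assms(6) ln_strict_mono by fastforce
  then have "L > 0" unfolding L_def by simp
  have b0_eq: "b0 = dQ / L" unfolding b0_def L_def ..
  have "exp (dQ / b0) = exp eps / (1 - delta)"
    unfolding b0_eq using \<open>L > 0\<close> assms(2,6) by (simp add: L_def exp_diff)
  moreover have "b0 > 0" unfolding b0_eq using \<open>L > 0\<close> assms(2) by simp
  ultimately have D1: "1 \<le> D" and D_lt: "D < exp eps / (1 - delta)"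
    and D_eq: "D = 1 \<longleftrightarrow> dQ = u - l"
    unfolding D_def using DeltaC_ge_1 DeltaC_less_exp DeltaC_eq_1_iff assms(1-3) by metis+
  have ln_D: "0 \<le> ln D" "ln D < L"
    using D1 ln_strict_mono[OF D_lt] assms(6) by (auto simp: L_def ln_div)
  have denom: "eps - ln D - ln (1 - delta) = L - ln D"
    unfolding L_def by simp
  have "dQ / (L - ln D) = dQ / L \<longleftrightarrow> ln D = 0"
    using ln_D assms(2) by (auto simp: field_simps)
  moreover have "dQ / L \<le> dQ / (L - ln D)"
    using ln_D \<open>L > 0\<close> assms(2) by (simp add: frac_le)
  ultimately show ?thesis
    unfolding fmap_def D_def[symmetric] denom
    using D1 D_lt D_eq ln_D assms(2) b0_eq by auto
qed

end
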